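(* Let $a<b$ be real numbers and let $h:[a,b)\to\mathbb{R}$ be an increasing function such that $$C:=\overline{\lim_{x\to a}}\operatorname{ess}\frac{h(x)-h(a)}{(x-a)\,h'(x)}<\infty.$$ Then for every $q\in(0,1)$, $$\varlimsup_{x\to a}\frac{h(a+q(x-a))-h(a)}{h(x)-h(a)}\ \leq\ q^{1/C}.$$
   Context: An increasing function is differentiable almost everywhere, so $h'(x)$ is defined for almost all $x$. For a function $f:[a,b)\to\mathbb{R}$ (defined almost everywhere), the essential upper limit $\overline{\lim_{x\to a}}\operatorname{ess} f(x)$ is the greatest lower bound of the numbers $t\in\mathbb{R}$ such that $f(x)\le t$ for almost all $x$ in some interval $[a,\delta]\subset[a,b)$. Limits at $a$ are right-hand limits. *)

theory Defs
  imports "HOL-Analysis.Analysis"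
begin

text \<open>Essential upper limit at a (from the right) of a function defined on [a,b):
  the greatest lower bound of the real numbers t such that f x \<le> t for almost
  all x in some interval [a,\<delta>] contained in [a,b).  Valued in the extended reals
  (the infimum of the empty set is \<infinity>).\<close>
definition ess_limsup_at_right :: "real \<Rightarrow> real \<Rightarrow> (real \<Rightarrow> ereal) \<Rightarrow> ereal" where
  "ess_limsup_at_right a b f =
     Inf (ereal ` {t. \<exists>\<delta>. a < \<delta> \<and> \<delta> < b \<and>
                     (AE x in lborel. x \<in> {a..\<delta>} \<longrightarrow> f x \<le> ereal t)})"

text \<open>A positive
  numerator over a zero derivative gives +\<infinity>; 0/0 is read as 0 (Isabelle's
  division convention, matching the ratio in the conclusion).\<close>
definition growth_quot :: "(real \<Rightarrow> real) \<Rightarrow> real \<Rightarrow> real \<Rightarrow> ereal" where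
  "growth_quot h a x =
     (if deriv h x = 0 \<and> h x \<noteq> h a then \<infinity>
      else ereal ((h x - h a) / ((x - a) * deriv h x)))"

text \<open>q^(1/C) for C \<in> [0,\<infinity>), with q^(1/0) = q^\<infinity> = 0 for q \<in> (0,1).\<close>
definition pow_inv :: "real \<Rightarrow> ereal \<Rightarrow> ereal" where
  "pow_inv q C = (if C = 0 then 0 else ereal (q powr (1 / real_of_ereal C)))"

end

theory Submission
  imports Defs
begin

text \<open>
  Put H(x) = h(x) - h(a) and let t > C. Then H(x) \<le> t (x - a) h'(x) for almost every x near a,
  so \<psi>(x) = ln H(x) - ln(x - a) / t has a nonnegative derivative almost everywhere there.
  Since ln H is increasing and ln(x - a) / t is Lipschitz away from a, \<psi> decreases at most at a
  bounded rate, and such a function with almost everywhere nonnegative derivative is increasing: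
  on a small open set covering the exceptional null set the Lipschitz bound controls the
  decrease, elsewhere the derivative does. Comparing \<psi> at a + q (x - a) and at x gives
  H(a + q (x - a)) \<le> q powr (1 / t) H(x), and letting t decrease to C yields the claim.
  That h is differentiable almost everywhere is Lebesgue's theorem on monotone functions, proved
  by the classical argument with the Vitali covering theorem.
\<close>

section \<open>Vitali coverings by intervals\<close>

lemma Vitali_covering_intervals:
  fixes K :: "(real \<times> real) set"
  assumes nondegenerate: "\<And>i. i \<in> K \<Longrightarrow> fst i < snd i"
    and fine: "\<And>x e. x \<in> S \<Longrightarrow> 0 < e \<Longrightarrow> \<exists>i\<in>K. x \<in> {fst i..snd i} \<and> snd i - fst i < e"
  obtains C where "countable C" "C \<subseteq> K"
    "pairwise (\<lambda>i j. disjnt {fst i..snd i} {fst j..snd j}) C"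
    "negligible (S - (\<Union>i\<in>C. {fst i..snd i}))"
proof -
  define c where "c i = (fst i + snd i) / 2" for i :: "real \<times> real"
  define r where "r i = (snd i - fst i) / 2" for i :: "real \<times> real"
  have cball_eq: "cball (c i) (r i) = {fst i..snd i}" if "i \<in> K" for i
    using nondegenerate[OF that] by (simp add: c_def r_def cball_eq_atLeastAtMost field_simps)
  obtain C where C: "countable C" "C \<subseteq> K"
    and disjoint: "pairwise (\<lambda>i j. disjnt (cball (c i) (r i)) (cball (c j) (r j))) C"
    and covers: "negligible (S - (\<Union>i\<in>C. cball (c i) (r i)))"
  proof (rule Vitali_covering_theorem_cballs[of K r S c])
    show "0 < r i" if "i \<in> K" for i
      using nondegenerate[OF that] by (simp add: r_def)
    fix x d :: real
    assume "x \<in> S" "0 < d"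
    then obtain i where "i \<in> K" "x \<in> {fst i..snd i}" "snd i - fst i < d"
      using fine by blast
    then show "\<exists>i. i \<in> K \<and> x \<in> cball (c i) (r i) \<and> r i < d"
      using cball_eq nondegenerate[of i] by (intro exI[of _ i]) (auto simp: r_def)
  qed
  show ?thesis
  proof (rule that[OF C])
    have "(\<Union>i\<in>C. cball (c i) (r i)) = (\<Union>i\<in>C. {fst i..snd i})"
      using C(2) cball_eq by (intro SUP_cong) auto
    then show "negligible (S - (\<Union>i\<in>C. {fst i..snd i}))"
      using covers by simp
    show "pairwise (\<lambda>i j. disjnt {fst i..snd i} {fst j..snd j}) C"
      unfolding pairwise_def
    proof (intro ballI impI)
      fix i j
      assume ij: "i \<in> C" "j \<in> C" "i \<noteq> j"
      then have "i \<in> K" "j \<in> K"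
        using C(2) by auto
      moreover have "disjnt (cball (c i) (r i)) (cball (c j) (r j))"
        using disjoint ij by (auto simp: pairwise_def)
      ultimately show "disjnt {fst i..snd i} {fst j..snd j}"
        using cball_eq[of i] cball_eq[of j] by simp
    qed
  qed
qed

lemma Vitali_covering_open_intervals:
  fixes K :: "(real \<times> real) set"
  assumes nondegenerate: "\<And>i. i \<in> K \<Longrightarrow> fst i < snd i"
    and fine: "\<And>x e. x \<in> S \<Longrightarrow> 0 < e \<Longrightarrow> \<exists>i\<in>K. x \<in> {fst i..snd i} \<and> snd i - fst i < e"
  obtains C where "countable C" "C \<subseteq> K"
    "pairwise (\<lambda>i j. disjnt {fst i..snd i} {fst j..snd j}) C"
    "negligible (S - (\<Union>i\<in>C. {fst i<..<snd i}))"
proof -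
  obtain C where C: "countable C" "C \<subseteq> K" "pairwise (\<lambda>i j. disjnt {fst i..snd i} {fst j..snd j}) C"
    and covers: "negligible (S - (\<Union>i\<in>C. {fst i..snd i}))"
    using Vitali_covering_intervals[OF nondegenerate fine] by blast
  have "countable (fst ` C \<union> snd ` C)"
    using C(1) by simp
  then have "negligible (fst ` C \<union> snd ` C)"
    unfolding negligible_iff_null_sets by (intro null_sets_completionI countable_imp_null_set_lborel)
  then have "negligible ((S - (\<Union>i\<in>C. {fst i..snd i})) \<union> (fst ` C \<union> snd ` C))"
    using covers by (rule negligible_Un[rotated])
  moreover have "S - (\<Union>i\<in>C. {fst i<..<snd i}) \<subseteq> (S - (\<Union>i\<in>C. {fst i..snd i})) \<union> (fst ` C \<union> snd ` C)"
  proof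
    fix x
    assume x: "x \<in> S - (\<Union>i\<in>C. {fst i<..<snd i})"
    show "x \<in> (S - (\<Union>i\<in>C. {fst i..snd i})) \<union> (fst ` C \<union> snd ` C)"
    proof (cases "x \<in> (\<Union>i\<in>C. {fst i..snd i})")
      case True
      then obtain i where "i \<in> C" "fst i \<le> x" "x \<le> snd i"
        by auto
      moreover have "\<not> (fst i < x \<and> x < snd i)"
        using x \<open>i \<in> C\<close> by auto
      ultimately have "x = fst i \<or> x = snd i"
        by linarith
      then show ?thesis
        using \<open>i \<in> C\<close> by auto
    qed (use x in auto)
  qed
  ultimately have "negligible (S - (\<Union>i\<in>C. {fst i<..<snd i}))"
    by (rule negligible_subset)
  then show ?thesis
    using that C by blast
qed

lemma lmeasurable_cover_negligible_gap:
  assumes "U \<in> lmeasurable" and "negligible (S - U)"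
  obtains T where "S \<subseteq> T" "T \<in> lmeasurable" "measure lebesgue T = measure lebesgue U"
proof
  show "S \<subseteq> U \<union> (S - U)"
    by auto
  show "U \<union> (S - U) \<in> lmeasurable"
    using fmeasurable.Un[OF assms(1) negligible_imp_measurable[OF assms(2)]] .
  show "measure lebesgue (U \<union> (S - U)) = measure lebesgue U"
    using assms by (intro measure_Un_null_set) (auto simp: negligible_iff_null_sets)
qed

lemma lmeasurable_outer_open:
  assumes "S \<in> lmeasurable" and "0 < e"
  obtains U where "open U" "S \<subseteq> U" "U \<in> lmeasurable" "measure lebesgue U < measure lebesgue S + e"
proof -
  obtain U where U: "open U" "S \<subseteq> U" "U - S \<in> lmeasurable" "emeasure lebesgue (U - S) < ennreal e"
    using sets_lebesgue_outer_open[OF fmeasurableD[OF assms(1)] assms(2)] by blast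
  have U_eq: "U = S \<union> (U - S)"
    using U(2) by auto
  have "U \<in> lmeasurable"
    using assms(1) U(3) by (subst U_eq) (rule fmeasurable.Un)
  moreover have "measure lebesgue U \<le> measure lebesgue S + measure lebesgue (U - S)"
    using assms(1) U(3) by (subst U_eq) (intro measure_Un_le; auto)
  moreover have "measure lebesgue (U - S) < e"
    using U(3,4) assms(2) by (simp add: emeasure_eq_measure2 ennreal_less_iff)
  ultimately show ?thesis
    using that U(1,2) by fastforce
qed

lemma sum_lengths_disjoint_intervals_le:
  fixes F :: "(real \<times> real) set"
  assumes "finite F" and "U \<in> lmeasurable"
    and "pairwise (\<lambda>i j. disjnt {fst i..snd i} {fst j..snd j}) F"
    and "\<And>i. i \<in> F \<Longrightarrow> fst i \<le> snd i \<and> {fst i..snd i} \<subseteq> U"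
  shows "(\<Sum>i\<in>F. snd i - fst i) \<le> measure lebesgue U"
proof -
  have "(\<Sum>i\<in>F. snd i - fst i) = (\<Sum>i\<in>F. measure lebesgue {fst i..snd i})"
    using assms(4) by simp
  also have "\<dots> = measure lebesgue (\<Union>i\<in>F. {fst i..snd i})"
    using assms(1,3)
    by (intro measure_negligible_finite_Union_image[symmetric]) (auto simp: pairwise_def disjnt_def)
  also have "\<dots> \<le> measure lebesgue U"
    using assms by (intro measure_mono_fmeasurable) auto
  finally show ?thesis .
qed

lemma sum_increments_le_mono:
  fixes f :: "real \<Rightarrow> real" and F :: "(real \<times> real) set"
  assumes "mono f" and "finite F"
    and "\<And>i. i \<in> F \<Longrightarrow> A \<le> fst i \<and> fst i < snd i \<and> snd i \<le> B"
    and "pairwise (\<lambda>i j. disjnt {fst i..snd i} {fst j..snd j}) F" and "A \<le> B"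
  shows "(\<Sum>i\<in>F. f (snd i) - f (fst i)) \<le> f B - f A"
  using assms(2-5)
proof (induction "card F" arbitrary: F B rule: less_induct)
  case less
  show ?case
  proof (cases "F = {}")
    case True
    then show ?thesis
      using \<open>mono f\<close> less.prems(4) by (simp add: mono_def)
  next
    case False
    define m where "m = Max (fst ` F)"
    have "m \<in> fst ` F"
      unfolding m_def using False less.prems(1) by (intro Max_in) auto
    then obtain i0 where i0: "i0 \<in> F" "fst i0 = m"
      by auto
    have left_of_m: "snd j \<le> m" if "j \<in> F - {i0}" for j
    proof (rule ccontr)
      assume "\<not> snd j \<le> m"
      moreover have "fst j \<le> m"
        using that less.prems(1) unfolding m_def by auto
      moreover have "disjnt {fst j..snd j} {fst i0..snd i0}"
        using less.prems(3) that i0(1) by (auto simp: pairwise_def)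
      ultimately show False
        using i0 less.prems(2)[OF i0(1)] by (auto simp: disjnt_def)
    qed
    have "(\<Sum>i\<in>F - {i0}. f (snd i) - f (fst i)) \<le> f m - f A"
    proof (rule less.hyps)
      show "card (F - {i0}) < card F"
        using less.prems(1) i0(1) by (rule card_Diff1_less)
      show "pairwise (\<lambda>i j. disjnt {fst i..snd i} {fst j..snd j}) (F - {i0})"
        using less.prems(3) by (rule pairwise_subset) auto
    qed (use left_of_m less.prems less.prems(2)[OF i0(1)] i0 in auto)
    moreover have "f (snd i0) \<le> f B"
      using i0 less.prems(2) \<open>mono f\<close> by (auto simp: mono_def)
    ultimately show ?thesis
      using i0 less.prems(1) by (simp add: sum.remove)
  qed
qed

lemma sum_increments_nested_le:
  fixes f :: "real \<Rightarrow> real" and I P :: "(real \<times> real) set"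
  assumes "mono f" and "finite I"
    and I_disjoint: "pairwise (\<lambda>i j. disjnt {fst i..snd i} {fst j..snd j}) I"
    and nested: "\<And>i. i \<in> I \<Longrightarrow> fst i < snd i \<and> (\<exists>j\<in>P. fst j \<le> fst i \<and> snd i \<le> snd j)"
    and increments: "\<And>F. F \<subseteq> P \<Longrightarrow> finite F \<Longrightarrow> (\<Sum>j\<in>F. f (snd j) - f (fst j)) \<le> B"
  shows "(\<Sum>i\<in>I. f (snd i) - f (fst i)) \<le> B"
proof -
  obtain parent where parent: "\<And>i. i \<in> I \<Longrightarrow> parent i \<in> P \<and> fst (parent i) \<le> fst i \<and> snd i \<le> snd (parent i)"
    using nested by metis
  have "(\<Sum>i\<in>I. f (snd i) - f (fst i)) =
        (\<Sum>j\<in>parent ` I. \<Sum>i\<in>{i\<in>I. parent i = j}. f (snd i) - f (fst i))"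
    using \<open>finite I\<close> by (rule sum.image_gen)
  also have "\<dots> \<le> (\<Sum>j\<in>parent ` I. f (snd j) - f (fst j))"
  proof (rule sum_mono)
    fix j
    assume "j \<in> parent ` I"
    then have "fst j \<le> snd j"
      using parent nested by fastforce
    moreover have "pairwise (\<lambda>i j. disjnt {fst i..snd i} {fst j..snd j}) {i\<in>I. parent i = j}"
      using I_disjoint by (rule pairwise_subset) auto
    ultimately show "(\<Sum>i\<in>{i\<in>I. parent i = j}. f (snd i) - f (fst i)) \<le> f (snd j) - f (fst j)"
      using \<open>finite I\<close> parent nested by (intro sum_increments_le_mono[OF \<open>mono f\<close>]) auto
  qed
  also have "\<dots> \<le> B"
    using parent \<open>finite I\<close> by (intro increments) auto
  finally show ?thesis .
qed

section \<open>Lebesgue's theorem on the differentiability of monotone functions\<close>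

text \<open>A monotone function fails to be differentiable at \<open>x\<close> only if it has both small slopes
  below \<open>p\<close> and large slopes above \<open>q\<close> at \<open>x\<close> for some rationals \<open>0 < p < q\<close>, or large
  slopes above every \<open>q\<close>.\<close>

definition small_slopes_at :: "(real \<Rightarrow> real) \<Rightarrow> real \<Rightarrow> real \<Rightarrow> bool" where
  "small_slopes_at f p x \<longleftrightarrow>
     (\<forall>e>0. \<exists>\<alpha> \<beta>. \<alpha> \<le> x \<and> x \<le> \<beta> \<and> \<alpha> < \<beta> \<and> \<beta> - \<alpha> < e \<and> f \<beta> - f \<alpha> < p * (\<beta> - \<alpha>))"

definition large_slopes_at :: "(real \<Rightarrow> real) \<Rightarrow> real \<Rightarrow> real \<Rightarrow> bool" where
  "large_slopes_at f q x \<longleftrightarrow>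
     (\<forall>e>0. \<exists>\<alpha> \<beta>. \<alpha> \<le> x \<and> x \<le> \<beta> \<and> \<alpha> < \<beta> \<and> \<beta> - \<alpha> < e \<and> q * (\<beta> - \<alpha>) < f \<beta> - f \<alpha>)"

definition straddle_quotients :: "(real \<Rightarrow> real) \<Rightarrow> real \<Rightarrow> real \<Rightarrow> real set" where
  "straddle_quotients f x e =
     {(f \<beta> - f \<alpha>) / (\<beta> - \<alpha>) | \<alpha> \<beta>. \<alpha> \<le> x \<and> x \<le> \<beta> \<and> \<alpha> < \<beta> \<and> \<beta> - \<alpha> < e}"

lemma small_slopes_at_iff: "small_slopes_at f p x \<longleftrightarrow> (\<forall>e>0. \<exists>s\<in>straddle_quotients f x e. s < p)"
  unfolding small_slopes_at_def straddle_quotients_def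
  by (intro all_cong1 imp_cong refl) (force simp: pos_divide_less_eq)

lemma large_slopes_at_iff: "large_slopes_at f q x \<longleftrightarrow> (\<forall>e>0. \<exists>s\<in>straddle_quotients f x e. q < s)"
  unfolding large_slopes_at_def straddle_quotients_def
  by (intro all_cong1 imp_cong refl) (force simp: pos_less_divide_eq)

lemma straddle_quotients_mono: "e \<le> e' \<Longrightarrow> straddle_quotients f x e \<subseteq> straddle_quotients f x e'"
  unfolding straddle_quotients_def by fastforce

lemma straddle_quotients_nonempty:
  assumes "0 < e"
  shows "straddle_quotients f x e \<noteq> {}"
proof -
  have "(f (x + e / 2) - f x) / ((x + e / 2) - x) \<in> straddle_quotients f x e"
    unfolding straddle_quotients_def using assms by (intro CollectI exI[of _ x] exI[of _ "x + e / 2"]) auto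
  then show ?thesis
    by blast
qed

lemma straddle_quotients_nonneg: "mono f \<Longrightarrow> s \<in> straddle_quotients f x e \<Longrightarrow> 0 \<le> s"
  unfolding straddle_quotients_def by (auto simp: mono_def)

lemma has_real_derivative_if_straddle_quotients:
  fixes f :: "real \<Rightarrow> real"
  assumes upper: "\<And>\<eta>. 0 < \<eta> \<Longrightarrow> \<exists>\<delta>>0. \<forall>s\<in>straddle_quotients f x \<delta>. s < D + \<eta>"
    and lower: "\<And>\<eta>. 0 < \<eta> \<Longrightarrow> \<exists>\<delta>>0. \<forall>s\<in>straddle_quotients f x \<delta>. D - \<eta> < s"
  shows "(f has_real_derivative D) (at x)"
  unfolding has_field_derivative_iff tendsto_iff eventually_at
proof (intro allI impI)
  fix \<eta> :: real
  assume "0 < \<eta>"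
  obtain \<delta>1 where "0 < \<delta>1" and \<delta>1: "\<forall>s\<in>straddle_quotients f x \<delta>1. s < D + \<eta>"
    using upper[OF \<open>0 < \<eta>\<close>] by blast
  obtain \<delta>2 where "0 < \<delta>2" and \<delta>2: "\<forall>s\<in>straddle_quotients f x \<delta>2. D - \<eta> < s"
    using lower[OF \<open>0 < \<eta>\<close>] by blast
  have "dist ((f y - f x) / (y - x)) D < \<eta>" if "y \<noteq> x" "dist y x < min \<delta>1 \<delta>2" for y
  proof -
    have "(f y - f x) / (y - x) \<in> straddle_quotients f x (min \<delta>1 \<delta>2)"
    proof (cases "x < y")
      case True
      then show ?thesis
        using that unfolding straddle_quotients_def
        by (intro CollectI exI[of _ x] exI[of _ y]) (auto simp: dist_real_def)
    next
      case False
      have "(f y - f x) / (y - x) = (f x - f y) / (x - y)"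
        by (metis minus_diff_eq minus_divide_divide)
      then show ?thesis
        using False that unfolding straddle_quotients_def
        by (intro CollectI exI[of _ y] exI[of _ x]) (auto simp: dist_real_def)
    qed
    then have "(f y - f x) / (y - x) \<in> straddle_quotients f x \<delta>1"
      and "(f y - f x) / (y - x) \<in> straddle_quotients f x \<delta>2"
      using straddle_quotients_mono[of "min \<delta>1 \<delta>2" \<delta>1 f x]
        straddle_quotients_mono[of "min \<delta>1 \<delta>2" \<delta>2 f x] by auto
    then have "(f y - f x) / (y - x) < D + \<eta>" "D - \<eta> < (f y - f x) / (y - x)"
      using \<delta>1 \<delta>2 by blast+
    then show ?thesis
      by (simp add: dist_real_def abs_less_iff)
  qed
  then show "\<exists>d>0. \<forall>y\<in>UNIV. y \<noteq> x \<and> dist y x < d \<longrightarrow> dist ((f y - f x) / (y - x)) D < \<eta>"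
    using \<open>0 < \<delta>1\<close> \<open>0 < \<delta>2\<close> by (intro exI[of _ "min \<delta>1 \<delta>2"]) auto
qed

lemma straddle_quotients_eventually_gt:
  fixes f :: "real \<Rightarrow> real"
  assumes "mono f"
    and no_gap: "\<And>p q. p \<in> \<rat> \<Longrightarrow> q \<in> \<rat> \<Longrightarrow> 0 < p \<Longrightarrow> p < q \<Longrightarrow>
                   \<not> (small_slopes_at f p x \<and> large_slopes_at f q x)"
    and large_below: "\<And>q. q < D \<Longrightarrow> large_slopes_at f q x"
    and "0 < \<eta>"
  shows "\<exists>\<delta>>0. \<forall>s\<in>straddle_quotients f x \<delta>. D - \<eta> < s"
proof (rule ccontr)
  let ?Q = "straddle_quotients f x"
  assume "\<not> (\<exists>\<delta>>0. \<forall>s\<in>?Q \<delta>. D - \<eta> < s)"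
  then have below: "\<forall>e>0. \<exists>s\<in>?Q e. s \<le> D - \<eta>"
    by (simp add: not_less) (metis not_le)
  obtain p where p: "p \<in> \<rat>" "D - \<eta> < p" "p < D - \<eta> / 2"
    using Rats_dense_in_real[of "D - \<eta>" "D - \<eta> / 2"] \<open>0 < \<eta>\<close> by auto
  obtain q where q: "q \<in> \<rat>" "D - \<eta> / 2 < q" "q < D"
    using Rats_dense_in_real[of "D - \<eta> / 2" D] \<open>0 < \<eta>\<close> by auto
  have "small_slopes_at f p x"
    unfolding small_slopes_at_iff
  proof (intro allI impI)
    fix e :: real
    assume "0 < e"
    then obtain s where "s \<in> ?Q e" "s \<le> D - \<eta>"
      using below by blast
    moreover have "s < p"
      using \<open>s \<le> D - \<eta>\<close> p(2) by linarith
    ultimately show "\<exists>s\<in>?Q e. s < p"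
      by (intro bexI[of _ s])
  qed
  moreover have "0 < p"
  proof -
    have "\<exists>s\<in>?Q 1. s \<le> D - \<eta>"
      using below by simp
    then obtain s where "s \<in> ?Q 1" "s \<le> D - \<eta>"
      by blast
    then show ?thesis
      using straddle_quotients_nonneg[OF \<open>mono f\<close> \<open>s \<in> ?Q 1\<close>] p(2) by linarith
  qed
  moreover have "p < q"
    using p(3) q(2) by linarith
  ultimately show False
    using no_gap[OF p(1) q(1)] large_below[OF q(3)] by blast
qed

lemma differentiable_if_no_slope_gap:
  fixes f :: "real \<Rightarrow> real"
  assumes "mono f"
    and no_gap: "\<And>p q. p \<in> \<rat> \<Longrightarrow> q \<in> \<rat> \<Longrightarrow> 0 < p \<Longrightarrow> p < q \<Longrightarrow>
                   \<not> (small_slopes_at f p x \<and> large_slopes_at f q x)"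
    and "\<not> large_slopes_at f n x"
  shows "\<exists>D. (f has_real_derivative D) (at x)"
proof -
  let ?Q = "straddle_quotients f x"
  obtain e0 where "0 < e0" and e0: "\<And>s. s \<in> ?Q e0 \<Longrightarrow> s \<le> n"
    using \<open>\<not> large_slopes_at f n x\<close> unfolding large_slopes_at_iff by (auto simp: not_less)
  have bdd: "bdd_above (?Q e)" if "e \<le> e0" for e
    using e0 straddle_quotients_mono[OF that, of f x] by (intro bdd_aboveI[of _ n]) auto
  define D where "D = Inf ((\<lambda>e. Sup (?Q e)) ` {0<..e0})"
  have sup_nonneg: "0 \<le> Sup (?Q e)" if "0 < e" "e \<le> e0" for e
    using straddle_quotients_nonempty[OF that(1)] straddle_quotients_nonneg[OF \<open>mono f\<close>] bdd[OF that(2)]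
    by (meson all_not_in_conv cSup_upper2)
  have D_le: "D \<le> Sup (?Q e)" if "0 < e" "e \<le> e0" for e
    unfolding D_def using that sup_nonneg by (intro cInf_lower bdd_belowI[of _ 0]) auto
  have upper: "\<exists>\<delta>>0. \<forall>s\<in>?Q \<delta>. s < D + \<eta>" if "0 < \<eta>" for \<eta>
  proof -
    obtain e where e: "0 < e" "e \<le> e0" "Sup (?Q e) < D + \<eta>"
      using cInf_lessD[of "(\<lambda>e. Sup (?Q e)) ` {0<..e0}" "D + \<eta>"] \<open>0 < e0\<close> \<open>0 < \<eta>\<close>
      unfolding D_def by auto
    then show ?thesis
      using cSup_upper[OF _ bdd[OF e(2)]] by (intro exI[of _ e]) force
  qed
  have large_below: "large_slopes_at f q x" if "q < D" for q
    unfolding large_slopes_at_iff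
  proof (intro allI impI)
    fix e :: real
    assume "0 < e"
    define e' where "e' = min e e0"
    have e': "0 < e'" "e' \<le> e0" "e' \<le> e"
      using \<open>0 < e\<close> \<open>0 < e0\<close> by (auto simp: e'_def)
    have "q < Sup (?Q e')"
      using D_le[OF e'(1,2)] \<open>q < D\<close> by linarith
    then obtain s where "s \<in> ?Q e'" "q < s"
      using less_cSup_iff[OF straddle_quotients_nonempty[OF e'(1)] bdd[OF e'(2)]] by blast
    then show "\<exists>s\<in>?Q e. q < s"
      using straddle_quotients_mono[OF e'(3)] by blast
  qed
  have "(f has_real_derivative D) (at x)"
  proof (rule has_real_derivative_if_straddle_quotients[OF upper])
    show "\<exists>\<delta>>0. \<forall>s\<in>?Q \<delta>. D - \<eta> < s" if "0 < \<eta>" for \<eta>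
      using \<open>mono f\<close> no_gap large_below that by (rule straddle_quotients_eventually_gt)
  qed
  then show ?thesis ..
qed

lemma large_slopes_outer_measure_le:
  fixes f :: "real \<Rightarrow> real" and P :: "(real \<times> real) set"
  assumes "mono f" and "0 < q"
    and P_disjoint: "pairwise (\<lambda>i j. disjnt {fst i..snd i} {fst j..snd j}) P"
    and inside: "\<And>x. x \<in> S \<Longrightarrow> \<exists>j\<in>P. fst j < x \<and> x < snd j"
    and large: "\<And>x. x \<in> S \<Longrightarrow> large_slopes_at f q x"
    and increments: "\<And>F. F \<subseteq> P \<Longrightarrow> finite F \<Longrightarrow> (\<Sum>j\<in>F. f (snd j) - f (fst j)) \<le> B"
  obtains T where "S \<subseteq> T" "T \<in> lmeasurable" "measure lebesgue T \<le> B / q"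
proof -
  define K where "K = {i. fst i < snd i \<and> (\<exists>j\<in>P. fst j \<le> fst i \<and> snd i \<le> snd j) \<and>
                          q * (snd i - fst i) < f (snd i) - f (fst i)}"
  obtain C where C: "countable C" "C \<subseteq> K"
    and C_disjoint: "pairwise (\<lambda>i j. disjnt {fst i..snd i} {fst j..snd j}) C"
    and C_covers: "negligible (S - (\<Union>i\<in>C. {fst i..snd i}))"
  proof (rule Vitali_covering_intervals)
    show "fst i < snd i" if "i \<in> K" for i
      using that by (simp add: K_def)
    fix x e :: real
    assume "x \<in> S" "0 < e"
    then obtain j where j: "j \<in> P" "fst j < x" "x < snd j"
      using inside by blast
    then have "0 < min e (min (x - fst j) (snd j - x))"
      using \<open>0 < e\<close> by simp
    then obtain \<alpha> \<beta> where "\<alpha> \<le> x" "x \<le> \<beta>" "\<alpha> < \<beta>" "\<beta> - \<alpha> < min e (min (x - fst j) (snd j - x))"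
        "q * (\<beta> - \<alpha>) < f \<beta> - f \<alpha>"
      using large[OF \<open>x \<in> S\<close>] unfolding large_slopes_at_def by blast
    then show "\<exists>i\<in>K. x \<in> {fst i..snd i} \<and> snd i - fst i < e"
      using j unfolding K_def by (intro bexI[of _ "(\<alpha>, \<beta>)"]) (auto intro!: bexI[of _ j])
  qed
  have finite_union_le: "measure lebesgue (\<Union>i\<in>I. {fst i..snd i}) \<le> B / q"
    if "I \<subseteq> C" "finite I" for I
  proof -
    have "measure lebesgue (\<Union>i\<in>I. {fst i..snd i}) \<le> (\<Sum>i\<in>I. measure lebesgue {fst i..snd i})"
      using that by (intro measure_UNION_le) auto
    also have "\<dots> \<le> (\<Sum>i\<in>I. (f (snd i) - f (fst i)) / q)"
    proof (rule sum_mono)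
      fix i
      assume "i \<in> I"
      then have "fst i < snd i" "q * (snd i - fst i) < f (snd i) - f (fst i)"
        using that C(2) by (auto simp: K_def)
      then show "measure lebesgue {fst i..snd i} \<le> (f (snd i) - f (fst i)) / q"
        using \<open>0 < q\<close> by (simp add: pos_le_divide_eq mult.commute)
    qed
    also have "\<dots> = (\<Sum>i\<in>I. f (snd i) - f (fst i)) / q"
      by (simp add: sum_divide_distrib)
    also have "\<dots> \<le> B / q"
    proof (rule divide_right_mono)
      show "(\<Sum>i\<in>I. f (snd i) - f (fst i)) \<le> B"
      proof (rule sum_increments_nested_le[OF \<open>mono f\<close> \<open>finite I\<close> _ _ increments])
        show "pairwise (\<lambda>i j. disjnt {fst i..snd i} {fst j..snd j}) I"
          using C_disjoint \<open>I \<subseteq> C\<close> by (rule pairwise_subset)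
        show "fst i < snd i \<and> (\<exists>j\<in>P. fst j \<le> fst i \<and> snd i \<le> snd j)" if "i \<in> I" for i
          using that \<open>I \<subseteq> C\<close> C(2) unfolding K_def by blast
      qed
    qed (use \<open>0 < q\<close> in simp)
    finally show ?thesis .
  qed
  have "(\<Union>i\<in>C. {fst i..snd i}) \<in> lmeasurable"
    by (rule fmeasurable_UN_bound[OF C(1) _ finite_union_le]) auto
  then obtain T where "S \<subseteq> T" "T \<in> lmeasurable"
      "measure lebesgue T = measure lebesgue (\<Union>i\<in>C. {fst i..snd i})"
    using C_covers by (rule lmeasurable_cover_negligible_gap)
  moreover have "measure lebesgue (\<Union>i\<in>C. {fst i..snd i}) \<le> B / q"
    by (rule measure_UN_bound[OF C(1) _ finite_union_le]) auto
  ultimately show ?thesis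
    using that by simp
qed

text \<open>Vitali intervals inside an open \<open>U \<supseteq> T\<close> on which \<open>f\<close> grows by less than \<open>p\<close> times the
  length cover almost all of \<open>E\<close>; the increments of \<open>f\<close> over them total at most \<open>p |U|\<close>, so
  the large slopes confine \<open>E\<close> to measure at most \<open>p |U| / q\<close>.\<close>

lemma small_large_slopes_measure_step:
  fixes f :: "real \<Rightarrow> real"
  assumes "mono f" and "0 < p" and "p < q"
    and small: "\<And>x. x \<in> E \<Longrightarrow> small_slopes_at f p x"
    and large: "\<And>x. x \<in> E \<Longrightarrow> large_slopes_at f q x"
    and "E \<subseteq> T" "T \<in> lmeasurable" "0 < \<epsilon>"
  obtains T' where "E \<subseteq> T'" "T' \<in> lmeasurable" "measure lebesgue T' \<le> p / q * (measure lebesgue T + \<epsilon>)"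
proof -
  obtain U where U: "open U" "T \<subseteq> U" "U \<in> lmeasurable" "measure lebesgue U < measure lebesgue T + \<epsilon>"
    using lmeasurable_outer_open[OF \<open>T \<in> lmeasurable\<close> \<open>0 < \<epsilon>\<close>] by blast
  define K where "K = {i. fst i < snd i \<and> {fst i..snd i} \<subseteq> U \<and> f (snd i) - f (fst i) < p * (snd i - fst i)}"
  obtain C where C: "countable C" "C \<subseteq> K"
    and C_disjoint: "pairwise (\<lambda>i j. disjnt {fst i..snd i} {fst j..snd j}) C"
    and C_covers: "negligible (E - (\<Union>i\<in>C. {fst i<..<snd i}))"
  proof (rule Vitali_covering_open_intervals)
    show "fst i < snd i" if "i \<in> K" for i
      using that by (simp add: K_def)
    fix x e :: real
    assume "x \<in> E" "0 < e"
    then obtain \<rho> where "0 < \<rho>" "ball x \<rho> \<subseteq> U"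
      using U(1,2) \<open>E \<subseteq> T\<close> open_contains_ball by blast
    then have "0 < min e \<rho>"
      using \<open>0 < e\<close> by simp
    then obtain \<alpha> \<beta> where "\<alpha> \<le> x" "x \<le> \<beta>" "\<alpha> < \<beta>" "\<beta> - \<alpha> < min e \<rho>"
        "f \<beta> - f \<alpha> < p * (\<beta> - \<alpha>)"
      using small[OF \<open>x \<in> E\<close>] unfolding small_slopes_at_def by blast
    moreover have "{\<alpha>..\<beta>} \<subseteq> ball x \<rho>"
      using calculation by (auto simp: dist_real_def)
    ultimately show "\<exists>i\<in>K. x \<in> {fst i..snd i} \<and> snd i - fst i < e"
      using \<open>ball x \<rho> \<subseteq> U\<close> unfolding K_def by (intro bexI[of _ "(\<alpha>, \<beta>)"]) auto
  qed
  define N where "N = E - (\<Union>i\<in>C. {fst i<..<snd i})"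
  have "negligible N"
    unfolding N_def by (rule C_covers)
  have inside: "\<exists>j\<in>C. fst j < x \<and> x < snd j" if "x \<in> E - N" for x
    using that unfolding N_def by auto
  have increments: "(\<Sum>j\<in>F. f (snd j) - f (fst j)) \<le> p * measure lebesgue U" if "F \<subseteq> C" "finite F" for F
  proof -
    have "(\<Sum>j\<in>F. f (snd j) - f (fst j)) \<le> (\<Sum>j\<in>F. p * (snd j - fst j))"
      using that C(2) by (intro sum_mono) (auto simp: K_def)
    also have "\<dots> = p * (\<Sum>j\<in>F. snd j - fst j)"
      by (simp add: sum_distrib_left)
    also have "\<dots> \<le> p * measure lebesgue U"
    proof (rule mult_left_mono)
      show "(\<Sum>j\<in>F. snd j - fst j) \<le> measure lebesgue U"
        using that C(2) U(3) pairwise_subset[OF C_disjoint \<open>F \<subseteq> C\<close>]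
        by (intro sum_lengths_disjoint_intervals_le) (auto simp: K_def)
    qed (use \<open>0 < p\<close> in simp)
    finally show ?thesis .
  qed
  have "0 < q"
    using \<open>0 < p\<close> \<open>p < q\<close> by linarith
  obtain T2 where T2: "E - N \<subseteq> T2" "T2 \<in> lmeasurable" "measure lebesgue T2 \<le> p * measure lebesgue U / q"
  proof (rule large_slopes_outer_measure_le[OF \<open>mono f\<close> \<open>0 < q\<close> C_disjoint inside _ increments])
    show "large_slopes_at f q x" if "x \<in> E - N" for x
      using that large by blast
  qed
  have "negligible (E - T2)"
    using \<open>negligible N\<close> by (rule negligible_subset) (use T2(1) in auto)
  with T2(2) obtain T' where "E \<subseteq> T'" "T' \<in> lmeasurable" "measure lebesgue T' = measure lebesgue T2"
    by (rule lmeasurable_cover_negligible_gap)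
  moreover have "p * measure lebesgue U / q \<le> p / q * (measure lebesgue T + \<epsilon>)"
    using U(4) \<open>0 < p\<close> \<open>0 < q\<close> by (simp add: divide_right_mono mult_left_mono)
  ultimately show ?thesis
    using that T2(3) by simp
qed

lemma negligible_small_large_slopes:
  fixes f :: "real \<Rightarrow> real"
  assumes "mono f" and "0 < p" and "p < q" and "bounded E"
    and small: "\<And>x. x \<in> E \<Longrightarrow> small_slopes_at f p x"
    and large: "\<And>x. x \<in> E \<Longrightarrow> large_slopes_at f q x"
  shows "negligible E"
proof -
  define \<M> where "\<M> = {measure lebesgue T | T. E \<subseteq> T \<and> T \<in> lmeasurable}"
  define M where "M = Inf \<M>"
  obtain x0 R where "E \<subseteq> cball x0 R"
    using bounded_subset_cball \<open>bounded E\<close> by blast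
  then have "measure lebesgue (cball x0 R) \<in> \<M>"
    unfolding \<M>_def using lmeasurable_cball by blast
  then have "\<M> \<noteq> {}"
    by blast
  have "bdd_below \<M>"
    unfolding \<M>_def by (rule bdd_belowI[of _ 0]) auto
  have "0 \<le> M"
    unfolding M_def \<M>_def using \<open>\<M> \<noteq> {}\<close>[unfolded \<M>_def] by (intro cInf_greatest) auto
  have "q / p * M \<le> M + \<epsilon>" if "0 < \<epsilon>" for \<epsilon>
  proof -
    have "q / p * M - \<epsilon> \<le> m" if "m \<in> \<M>" for m
    proof -
      obtain T where T: "E \<subseteq> T" "T \<in> lmeasurable" "m = measure lebesgue T"
        using \<open>m \<in> \<M>\<close> unfolding \<M>_def by blast
      obtain T' where "E \<subseteq> T'" "T' \<in> lmeasurable" "measure lebesgue T' \<le> p / q * (m + \<epsilon>)"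
        using small_large_slopes_measure_step[OF assms(1-3) small large T(1,2) \<open>0 < \<epsilon>\<close>] T(3) by blast
      moreover have "M \<le> measure lebesgue T'"
        unfolding M_def using \<open>bdd_below \<M>\<close> calculation(1,2) unfolding \<M>_def
        by (intro cInf_lower) auto
      ultimately have "M \<le> p / q * (m + \<epsilon>)"
        by linarith
      then show ?thesis
        using \<open>0 < p\<close> \<open>p < q\<close> by (simp add: field_simps)
    qed
    then have "q / p * M - \<epsilon> \<le> M"
      unfolding M_def using \<open>\<M> \<noteq> {}\<close> by (intro cInf_greatest)
    then show ?thesis
      by simp
  qed
  then have "q / p * M \<le> M"
    by (rule field_le_epsilon)
  then have "(q / p - 1) * M \<le> 0"
    by (simp add: left_diff_distrib)
  moreover have "0 < q / p - 1"
    using \<open>0 < p\<close> \<open>p < q\<close> by simp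
  ultimately have "M = 0"
    using \<open>0 \<le> M\<close> by (simp add: mult_le_0_iff)
  show ?thesis
    unfolding negligible_outer
  proof (intro allI impI)
    fix e :: real
    assume "0 < e"
    then obtain m where "m \<in> \<M>" "m < e"
      using cInf_lessD[OF \<open>\<M> \<noteq> {}\<close>] \<open>M = 0\<close> unfolding M_def by auto
    then show "\<exists>T. E \<subseteq> T \<and> T \<in> lmeasurable \<and> measure lebesgue T < e"
      unfolding \<M>_def by blast
  qed
qed

lemma negligible_unbounded_slopes:
  fixes f :: "real \<Rightarrow> real"
  assumes "mono f" and "c < d" and "E \<subseteq> {c<..<d}"
    and large: "\<And>x n. x \<in> E \<Longrightarrow> large_slopes_at f (real (Suc n)) x"
  shows "negligible E"
  unfolding negligible_outer_le
proof (intro allI impI)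
  fix e :: real
  assume "0 < e"
  obtain n where "(f d - f c) / e < real n"
    using reals_Archimedean2 by blast
  then have "(f d - f c) / e < real (Suc n)"
    by simp
  then have bound: "(f d - f c) / real (Suc n) \<le> e"
    using \<open>0 < e\<close> by (simp add: field_simps)
  have increments: "(\<Sum>j\<in>F. f (snd j) - f (fst j)) \<le> f d - f c" if "F \<subseteq> {(c, d)}" for F
    using that \<open>mono f\<close> \<open>c < d\<close> by (cases "F = {}") (auto simp: subset_singleton_iff mono_def)
  obtain T where "E \<subseteq> T" "T \<in> lmeasurable" "measure lebesgue T \<le> (f d - f c) / real (Suc n)"
    by (rule large_slopes_outer_measure_le[OF \<open>mono f\<close> _ _ _ large increments])
      (use \<open>E \<subseteq> {c<..<d}\<close> in auto)
  then show "\<exists>T. E \<subseteq> T \<and> T \<in> lmeasurable \<and> measure lebesgue T \<le> e"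
    using bound by auto
qed

lemma mono_differentiable_ae_interval:
  fixes f :: "real \<Rightarrow> real"
  assumes "mono f" and "c < d"
  shows "negligible {x\<in>{c<..<d}. \<not> (\<exists>D. (f has_real_derivative D) (at x))}"
proof -
  define PQ :: "(real \<times> real) set" where "PQ = {pq. fst pq \<in> \<rat> \<and> snd pq \<in> \<rat> \<and> 0 < fst pq \<and> fst pq < snd pq}"
  define gap where "gap pq = {x\<in>{c<..<d}. small_slopes_at f (fst pq) x \<and> large_slopes_at f (snd pq) x}"
    for pq :: "real \<times> real"
  define unbounded where "unbounded = {x\<in>{c<..<d}. \<forall>n. large_slopes_at f (real (Suc n)) x}"
  have "countable PQ"
    unfolding PQ_def by (rule countable_subset[OF _ countable_SIGMA[OF countable_rat countable_rat]]) auto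
  have "negligible (gap pq)" if "pq \<in> PQ" for pq
  proof (rule negligible_small_large_slopes[OF \<open>mono f\<close>])
    show "0 < fst pq" "fst pq < snd pq"
      using that by (auto simp: PQ_def)
    show "bounded (gap pq)"
      by (rule bounded_subset[of "{c..d}"]) (auto simp: gap_def)
  qed (auto simp: gap_def)
  then have "negligible (\<Union>(gap ` PQ))"
    using \<open>countable PQ\<close> by (intro negligible_countable_Union) auto
  moreover have "negligible unbounded"
    unfolding unbounded_def by (rule negligible_unbounded_slopes[OF \<open>mono f\<close> \<open>c < d\<close>]) auto
  moreover have "{x\<in>{c<..<d}. \<not> (\<exists>D. (f has_real_derivative D) (at x))} \<subseteq> \<Union>(gap ` PQ) \<union> unbounded"
  proof (rule subsetI, rule ccontr)
    fix x
    assume x: "x \<in> {x\<in>{c<..<d}. \<not> (\<exists>D. (f has_real_derivative D) (at x))}"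
      and "x \<notin> \<Union>(gap ` PQ) \<union> unbounded"
    then obtain n where "\<not> large_slopes_at f (real (Suc n)) x"
      and "\<And>pq. pq \<in> PQ \<Longrightarrow> x \<notin> gap pq"
      unfolding unbounded_def by auto
    then have "\<exists>D. (f has_real_derivative D) (at x)"
      using x by (intro differentiable_if_no_slope_gap[OF \<open>mono f\<close>]) (auto simp: PQ_def gap_def)
    then show False
      using x by blast
  qed
  ultimately show ?thesis
    by (meson negligible_Un negligible_subset)
qed

lemma mono_on_differentiable_ae_subinterval:
  fixes h :: "real \<Rightarrow> real"
  assumes "mono_on {a..<b} h" and "a \<le> c" "c < d" "d < b"
  shows "negligible {x\<in>{c<..<d}. \<not> (\<exists>D. (h has_real_derivative D) (at x))}"
proof -
  define g where "g x = h (max c (min d x))" for x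
  have "mono g"
  proof (rule monoI)
    fix u v :: real
    assume "u \<le> v"
    then show "g u \<le> g v"
      unfolding g_def using assms(2-4) by (intro mono_onD[OF assms(1)]) auto
  qed
  have "{x\<in>{c<..<d}. \<not> (\<exists>D. (h has_real_derivative D) (at x))} \<subseteq>
        {x\<in>{c<..<d}. \<not> (\<exists>D. (g has_real_derivative D) (at x))}"
  proof (rule subsetI, rule CollectI, rule conjI)
    fix x
    assume x: "x \<in> {x\<in>{c<..<d}. \<not> (\<exists>D. (h has_real_derivative D) (at x))}"
    then show "x \<in> {c<..<d}"
      by simp
    show "\<not> (\<exists>D. (g has_real_derivative D) (at x))"
    proof
      assume "\<exists>D. (g has_real_derivative D) (at x)"
      then obtain D where "(g has_real_derivative D) (at x)"
        by blast
      then have "(h has_real_derivative D) (at x)"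
      proof (rule has_field_derivative_transform_within_open)
        show "open {c<..<d}" "x \<in> {c<..<d}"
          using x by simp_all
        show "g y = h y" if "y \<in> {c<..<d}" for y
          using that by (simp add: g_def)
      qed
      then show False
        using x by blast
    qed
  qed
  then show ?thesis
    using mono_differentiable_ae_interval[OF \<open>mono g\<close> \<open>c < d\<close>] by (rule negligible_subset[rotated])
qed

lemma mono_on_differentiable_ae:
  fixes h :: "real \<Rightarrow> real"
  assumes "mono_on {a..<b} h"
  shows "negligible {x\<in>{a<..<b}. \<not> (\<exists>D. (h has_real_derivative D) (at x))}"
proof -
  define R :: "(real \<times> real) set" where "R = {cd. fst cd \<in> \<rat> \<and> snd cd \<in> \<rat> \<and> a < fst cd \<and> fst cd < snd cd \<and> snd cd < b}"
  define bad where "bad cd = {x\<in>{fst cd<..<snd cd}. \<not> (\<exists>D. (h has_real_derivative D) (at x))}"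
    for cd :: "real \<times> real"
  have "countable R"
    unfolding R_def by (rule countable_subset[OF _ countable_SIGMA[OF countable_rat countable_rat]]) auto
  have "negligible (bad cd)" if "cd \<in> R" for cd
    unfolding bad_def using that by (intro mono_on_differentiable_ae_subinterval[OF assms]) (auto simp: R_def)
  then have "negligible (\<Union>(bad ` R))"
    using \<open>countable R\<close> by (intro negligible_countable_Union) auto
  moreover have "{x\<in>{a<..<b}. \<not> (\<exists>D. (h has_real_derivative D) (at x))} \<subseteq> \<Union>(bad ` R)"
  proof (rule subsetI)
    fix x
    assume "x \<in> {x\<in>{a<..<b}. \<not> (\<exists>D. (h has_real_derivative D) (at x))}"
    then have x: "x \<in> {a<..<b}" "\<not> (\<exists>D. (h has_real_derivative D) (at x))"
      by auto
    obtain c where "c \<in> \<rat>" "a < c" "c < x"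
      using Rats_dense_in_real[of a x] x(1) by auto
    moreover obtain d where "d \<in> \<rat>" "x < d" "d < b"
      using Rats_dense_in_real[of x b] x(1) by auto
    ultimately have "(c, d) \<in> R" "x \<in> bad (c, d)"
      using x by (auto simp: R_def bad_def)
    then show "x \<in> \<Union>(bad ` R)"
      by blast
  qed
  ultimately show ?thesis
    by (rule negligible_subset)
qed

section \<open>Increasing functions with almost everywhere nonnegative derivative\<close>

lemma le_at_right_end_if_lower_lipschitz:
  fixes \<Phi> :: "real \<Rightarrow> real"
  assumes "y < s" and "0 \<le> M"
    and left: "\<And>r. y \<le> r \<Longrightarrow> r < s \<Longrightarrow> c \<le> \<Phi> r"
    and lower_lipschitz: "\<And>r. y \<le> r \<Longrightarrow> r < s \<Longrightarrow> - M * (s - r) \<le> \<Phi> s - \<Phi> r"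
  shows "c \<le> \<Phi> s"
proof (rule field_le_epsilon)
  fix e :: real
  assume "0 < e"
  define r where "r = max y (s - e / (M + 1))"
  have r: "y \<le> r" "r < s"
    using \<open>y < s\<close> \<open>0 < e\<close> \<open>0 \<le> M\<close> by (auto simp: r_def)
  have "M * (s - r) \<le> M * (e / (M + 1))"
    using \<open>0 \<le> M\<close> by (intro mult_left_mono) (auto simp: r_def)
  also have "\<dots> \<le> e"
    using \<open>0 < e\<close> \<open>0 \<le> M\<close> by (simp add: field_simps)
  finally show "c \<le> \<Phi> s + e"
    using left[OF r] lower_lipschitz[OF r] by linarith
qed

lemma le_if_locally_right_increasing:
  fixes \<Phi> :: "real \<Rightarrow> real"
  assumes "y \<le> x" and "0 \<le> M"
    and lower_lipschitz: "\<And>s s'. y \<le> s \<Longrightarrow> s < s' \<Longrightarrow> s' \<le> x \<Longrightarrow> - M * (s' - s) \<le> \<Phi> s' - \<Phi> s"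
    and right_increasing: "\<And>s. y \<le> s \<Longrightarrow> s < x \<Longrightarrow> \<exists>\<rho>>0. \<forall>s'. s < s' \<and> s' < s + \<rho> \<longrightarrow> \<Phi> s \<le> \<Phi> s'"
  shows "\<Phi> y \<le> \<Phi> x"
proof -
  define A where "A = {s\<in>{y..x}. \<forall>r\<in>{y..s}. \<Phi> y \<le> \<Phi> r}"
  define s0 where "s0 = Sup A"
  have "y \<in> A"
    using \<open>y \<le> x\<close> by (auto simp: A_def)
  then have "A \<noteq> {}"
    by blast
  have "bdd_above A"
    unfolding A_def by (rule bdd_aboveI[of _ x]) auto
  have "y \<le> s0"
    unfolding s0_def using \<open>y \<in> A\<close> \<open>bdd_above A\<close> by (rule cSup_upper)
  have "s0 \<le> x"
    unfolding s0_def using \<open>A \<noteq> {}\<close> by (rule cSup_least) (auto simp: A_def)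
  have below: "\<Phi> y \<le> \<Phi> r" if "y \<le> r" "r < s0" for r
  proof -
    obtain s where "s \<in> A" "r < s"
      using less_cSup_iff[OF \<open>A \<noteq> {}\<close> \<open>bdd_above A\<close>] \<open>r < s0\<close> unfolding s0_def by blast
    then show ?thesis
      using that unfolding A_def by auto
  qed
  have at_s0: "\<Phi> y \<le> \<Phi> s0"
  proof (cases "s0 = y")
    case False
    with \<open>y \<le> s0\<close> have "y < s0"
      by simp
    then show ?thesis
    proof (rule le_at_right_end_if_lower_lipschitz[OF _ \<open>0 \<le> M\<close> below])
      show "- M * (s0 - r) \<le> \<Phi> s0 - \<Phi> r" if "y \<le> r" "r < s0" for r
        using lower_lipschitz[of r s0] that \<open>s0 \<le> x\<close> by simp
    qed
  qed simp
  have "s0 \<in> A"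
    unfolding A_def
  proof (intro CollectI conjI ballI)
    show "s0 \<in> {y..x}"
      using \<open>y \<le> s0\<close> \<open>s0 \<le> x\<close> by simp
    show "\<Phi> y \<le> \<Phi> r" if "r \<in> {y..s0}" for r
      using that below at_s0 by (cases "r = s0") auto
  qed
  have "s0 = x"
  proof (rule ccontr)
    assume "s0 \<noteq> x"
    with \<open>s0 \<le> x\<close> have "s0 < x"
      by simp
    then obtain \<rho> where "0 < \<rho>" and \<rho>: "\<And>s'. s0 < s' \<Longrightarrow> s' < s0 + \<rho> \<Longrightarrow> \<Phi> s0 \<le> \<Phi> s'"
      using right_increasing \<open>y \<le> s0\<close> by blast
    define s1 where "s1 = min x (s0 + \<rho> / 2)"
    have s1: "s0 < s1" "s1 \<le> x" "s1 < s0 + \<rho>"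
      using \<open>s0 < x\<close> \<open>0 < \<rho>\<close> by (auto simp: s1_def)
    have "\<Phi> y \<le> \<Phi> r" if "r \<in> {y..s1}" for r
    proof (cases "r \<le> s0")
      case True
      then show ?thesis
        using \<open>s0 \<in> A\<close> that unfolding A_def by auto
    next
      case False
      then show ?thesis
        using \<rho>[of r] at_s0 that s1 by auto
    qed
    then have "s1 \<in> A"
      unfolding A_def using s1 \<open>y \<le> s0\<close> by auto
    then have "s1 \<le> s0"
      unfolding s0_def using \<open>bdd_above A\<close> by (rule cSup_upper)
    then show False
      using s1 by simp
  qed
  then show ?thesis
    using \<open>s0 \<in> A\<close> unfolding A_def by auto
qed

lemma measure_Int_atLeastAtMost_increment:
  assumes "U \<in> lmeasurable" and "y \<le> s" "s < s'" and "{s<..<s'} \<subseteq> U"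
  shows "measure lebesgue (U \<inter> {y..s}) + (s' - s) \<le> measure lebesgue (U \<inter> {y..s'})"
proof -
  have lm: "U \<inter> {y..t} \<in> lmeasurable" for t
    using assms(1) by (rule fmeasurable_Int_fmeasurable) auto
  have "measure lebesgue (U \<inter> {y..s} \<union> {s<..<s'}) = measure lebesgue (U \<inter> {y..s}) + (s' - s)"
  proof -
    have "{s<..<s'} - U \<inter> {y..s} = {s<..<s'}"
      by auto
    then show ?thesis
      using measure_Un2[OF lm[of s] lmeasurable_interval(2)] \<open>s < s'\<close> by simp
  qed
  moreover have "measure lebesgue (U \<inter> {y..s} \<union> {s<..<s'}) \<le> measure lebesgue (U \<inter> {y..s'})"
    using assms lm by (intro measure_mono_fmeasurable) (auto intro: fmeasurable.Un lmeasurable_interval(2))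
  ultimately show ?thesis
    by linarith
qed

lemma add_measure_right_increasing_on_open:
  fixes \<psi> :: "real \<Rightarrow> real"
  assumes "open U" "U \<in> lmeasurable" "s \<in> U" "y \<le> s" "s < x" "0 \<le> M"
    and lower_lipschitz: "\<And>s'. s < s' \<Longrightarrow> s' \<le> x \<Longrightarrow> - M * (s' - s) \<le> \<psi> s' - \<psi> s"
  obtains \<rho> where "0 < \<rho>"
    "\<And>s'. s < s' \<Longrightarrow> s' < s + \<rho> \<Longrightarrow>
       \<psi> s + M * measure lebesgue (U \<inter> {y..s}) \<le> \<psi> s' + M * measure lebesgue (U \<inter> {y..s'})"
proof -
  obtain \<rho> where "0 < \<rho>" "ball s \<rho> \<subseteq> U"
    using assms(1,3) open_contains_ball by blast
  have "\<psi> s + M * measure lebesgue (U \<inter> {y..s}) \<le> \<psi> s' + M * measure lebesgue (U \<inter> {y..s'})"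
    if "s < s'" "s' < s + min \<rho> (x - s)" for s'
  proof -
    have "{s<..<s'} \<subseteq> ball s \<rho>"
      using that by (auto simp: dist_real_def)
    then have "{s<..<s'} \<subseteq> U"
      using \<open>ball s \<rho> \<subseteq> U\<close> by blast
    then have "measure lebesgue (U \<inter> {y..s}) + (s' - s) \<le> measure lebesgue (U \<inter> {y..s'})"
      by (rule measure_Int_atLeastAtMost_increment[OF assms(2,4) that(1)])
    then have "M * (s' - s) \<le> M * (measure lebesgue (U \<inter> {y..s'}) - measure lebesgue (U \<inter> {y..s}))"
      using \<open>0 \<le> M\<close> by (intro mult_left_mono) auto
    moreover have "- M * (s' - s) \<le> \<psi> s' - \<psi> s"
      using lower_lipschitz that by simp
    ultimately show ?thesis
      by (simp add: algebra_simps)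
  qed
  moreover have "0 < min \<rho> (x - s)"
    using \<open>0 < \<rho>\<close> \<open>s < x\<close> by simp
  ultimately show ?thesis
    using that by blast
qed

lemma le_if_deriv_nonneg_ae_approx:
  fixes \<psi> :: "real \<Rightarrow> real"
  assumes "y \<le> x" and "0 \<le> M" and "0 < \<epsilon>"
    and lower_lipschitz: "\<And>s s'. y \<le> s \<Longrightarrow> s < s' \<Longrightarrow> s' \<le> x \<Longrightarrow> - M * (s' - s) \<le> \<psi> s' - \<psi> s"
    and "negligible N"
    and deriv: "\<And>s. s \<in> {y..<x} \<Longrightarrow> s \<notin> N \<Longrightarrow> \<exists>D\<ge>0. (\<psi> has_real_derivative D) (at s)"
  shows "\<psi> y \<le> \<psi> x + \<epsilon> * (x - y) + M * \<epsilon>"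
proof -
  obtain U where U: "open U" "N \<subseteq> U" "U \<in> lmeasurable" "measure lebesgue U < \<epsilon>"
    using lmeasurable_outer_open[OF negligible_imp_measurable[OF \<open>negligible N\<close>] \<open>0 < \<epsilon>\<close>]
      negligible_imp_measure0[OF \<open>negligible N\<close>] by auto
  define \<mu> where "\<mu> s = measure lebesgue (U \<inter> {y..s})" for s
  have \<mu>_mono: "\<mu> s \<le> \<mu> s'" if "s \<le> s'" for s s'
    unfolding \<mu>_def using that U(3)
    by (intro measure_mono_fmeasurable) (auto intro: fmeasurable_Int_fmeasurable fmeasurableD)
  text \<open>The term \<open>M \<mu>\<close> pays for the possible decrease of \<open>\<psi>\<close> on the open set \<open>U \<supseteq> N\<close>,
    and \<open>\<epsilon> (s - y)\<close> for the error in the difference quotients elsewhere.\<close>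
  define \<Phi> where "\<Phi> s = \<psi> s + \<epsilon> * (s - y) + M * \<mu> s" for s
  have "\<Phi> y \<le> \<Phi> x"
  proof (rule le_if_locally_right_increasing[OF \<open>y \<le> x\<close> \<open>0 \<le> M\<close>])
    fix s s'
    assume "y \<le> s" "s < s'" "s' \<le> x"
    moreover have "0 \<le> \<epsilon> * (s' - s)" "M * \<mu> s \<le> M * \<mu> s'"
      using \<open>s < s'\<close> \<open>0 < \<epsilon>\<close> \<open>0 \<le> M\<close> \<mu>_mono[of s s'] by (simp_all add: mult_left_mono)
    ultimately show "- M * (s' - s) \<le> \<Phi> s' - \<Phi> s"
      using lower_lipschitz[of s s'] unfolding \<Phi>_def by (simp add: algebra_simps)
  next
    fix s
    assume s: "y \<le> s" "s < x"
    show "\<exists>\<rho>>0. \<forall>s'. s < s' \<and> s' < s + \<rho> \<longrightarrow> \<Phi> s \<le> \<Phi> s'"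
    proof (cases "s \<in> N")
      case True
      then have "s \<in> U"
        using U(2) by blast
      obtain \<rho> where "0 < \<rho>" and \<rho>: "\<And>s'. s < s' \<Longrightarrow> s' < s + \<rho> \<Longrightarrow> \<psi> s + M * \<mu> s \<le> \<psi> s' + M * \<mu> s'"
        using add_measure_right_increasing_on_open[OF U(1,3) \<open>s \<in> U\<close> s \<open>0 \<le> M\<close> lower_lipschitz[OF s(1)]]
        unfolding \<mu>_def by blast
      have "\<Phi> s \<le> \<Phi> s'" if "s < s'" "s' < s + \<rho>" for s'
      proof -
        have "\<epsilon> * (s - y) \<le> \<epsilon> * (s' - y)"
          using \<open>0 < \<epsilon>\<close> that(1) by simp
        then show ?thesis
          using \<rho>[OF that] unfolding \<Phi>_def by linarith
      qed
      then show ?thesis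
        using \<open>0 < \<rho>\<close> by blast
    next
      case False
      then obtain D where "0 \<le> D" and D: "(\<psi> has_real_derivative D) (at s)"
        using deriv s by auto
      then have "((\<lambda>z. \<psi> z + \<epsilon> * (z - y)) has_real_derivative D + \<epsilon>) (at s)"
        by (auto intro!: derivative_eq_intros)
      moreover have "0 < D + \<epsilon>"
        using \<open>0 \<le> D\<close> \<open>0 < \<epsilon>\<close> by simp
      ultimately obtain \<rho> where "0 < \<rho>"
        and \<rho>: "\<And>h. 0 < h \<Longrightarrow> h < \<rho> \<Longrightarrow> \<psi> s + \<epsilon> * (s - y) < \<psi> (s + h) + \<epsilon> * (s + h - y)"
        by (blast dest: DERIV_pos_inc_right)
      have "\<Phi> s \<le> \<Phi> s'" if "s < s'" "s' < s + \<rho>" for s'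
      proof -
        have "\<psi> s + \<epsilon> * (s - y) < \<psi> s' + \<epsilon> * (s' - y)"
          using \<rho>[of "s' - s"] that by simp
        moreover have "M * \<mu> s \<le> M * \<mu> s'"
          using that \<mu>_mono[of s s'] \<open>0 \<le> M\<close> by (simp add: mult_left_mono)
        ultimately show ?thesis
          unfolding \<Phi>_def by simp
      qed
      then show ?thesis
        using \<open>0 < \<rho>\<close> by blast
    qed
  qed
  moreover have "0 \<le> \<mu> y" "\<mu> x \<le> measure lebesgue U"
    unfolding \<mu>_def using U(3) by (auto intro!: measure_mono_fmeasurable fmeasurableD)
  moreover have "M * \<mu> x \<le> M * \<epsilon>"
    using calculation(3) U(4) \<open>0 \<le> M\<close> by (intro mult_left_mono) auto
  moreover have "0 \<le> M * \<mu> y"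
    using calculation(2) \<open>0 \<le> M\<close> by simp
  ultimately show ?thesis
    unfolding \<Phi>_def by simp
qed

text \<open>Without the lower Lipschitz bound this fails: a decreasing Cantor function has derivative
  \<open>0\<close> almost everywhere.\<close>

lemma le_if_deriv_nonneg_ae:
  fixes \<psi> :: "real \<Rightarrow> real"
  assumes "y \<le> x" and "0 \<le> M"
    and lower_lipschitz: "\<And>s s'. y \<le> s \<Longrightarrow> s < s' \<Longrightarrow> s' \<le> x \<Longrightarrow> - M * (s' - s) \<le> \<psi> s' - \<psi> s"
    and "negligible N"
    and deriv: "\<And>s. s \<in> {y..<x} \<Longrightarrow> s \<notin> N \<Longrightarrow> \<exists>D\<ge>0. (\<psi> has_real_derivative D) (at s)"
  shows "\<psi> y \<le> \<psi> x"
proof (rule field_le_epsilon)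
  fix e :: real
  assume "0 < e"
  define \<epsilon> where "\<epsilon> = e / (x - y + M + 1)"
  have "0 < x - y + M + 1"
    using assms(1,2) by simp
  then have "0 < \<epsilon>"
    using \<open>0 < e\<close> by (simp add: \<epsilon>_def)
  have "\<epsilon> * (x - y) + M * \<epsilon> = \<epsilon> * (x - y + M)"
    by (simp add: algebra_simps)
  also have "\<dots> \<le> \<epsilon> * (x - y + M + 1)"
    using \<open>0 < \<epsilon>\<close> by simp
  also have "\<dots> = e"
    using \<open>0 < x - y + M + 1\<close> by (simp add: \<epsilon>_def)
  finally show "\<psi> y \<le> \<psi> x + e"
    using le_if_deriv_nonneg_ae_approx[OF assms(1,2) \<open>0 < \<epsilon>\<close> lower_lipschitz \<open>negligible N\<close> deriv] by simp
qed

section \<open>The growth estimate\<close>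

lemma mono_on_deriv_nonneg:
  fixes h :: "real \<Rightarrow> real"
  assumes "mono_on {a..<b} h" and "a \<le> s" "s < b" and "(h has_real_derivative D) (at s)"
  shows "0 \<le> D"
proof -
  have "((\<lambda>z. (h z - h s) / (z - s)) \<longlongrightarrow> D) (at s)"
    using assms(4) by (simp add: has_field_derivative_iff)
  then have "((\<lambda>z. (h z - h s) / (z - s)) \<longlongrightarrow> D) (at_right s)"
    by (rule tendsto_within_subset) auto
  moreover have "\<forall>\<^sub>F z in at_right s. 0 \<le> (h z - h s) / (z - s)"
  proof (rule eventually_at_rightI[of s b])
    fix z
    assume "z \<in> {s<..<b}"
    then have "h s \<le> h z"
      using assms(2) by (intro mono_onD[OF assms(1)]) auto
    then show "0 \<le> (h z - h s) / (z - s)"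
      using \<open>z \<in> {s<..<b}\<close> by simp
  qed fact
  ultimately show ?thesis
    by (rule tendsto_lowerbound) simp
qed

lemma ln_growth_has_nonneg_derivative:
  fixes h :: "real \<Rightarrow> real"
  assumes "0 < t" and "a < s" and "h a < h s"
    and D: "(h has_real_derivative D) (at s)" and "0 \<le> D"
    and "growth_quot h a s \<le> ereal t"
  shows "\<exists>D'\<ge>0. ((\<lambda>z. ln (h z - h a) - ln (z - a) / t) has_real_derivative D') (at s)"
proof -
  have "deriv h s = D"
    using D by (rule DERIV_imp_deriv)
  then have "D \<noteq> 0"
    using assms(3,6) unfolding growth_quot_def by auto
  with \<open>0 \<le> D\<close> have "0 < D"
    by simp
  have "(h s - h a) / ((s - a) * D) \<le> t"
    using assms(3,6) \<open>deriv h s = D\<close> \<open>D \<noteq> 0\<close> unfolding growth_quot_def by auto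
  then have "h s - h a \<le> t * ((s - a) * D)"
    using \<open>0 < D\<close> \<open>a < s\<close> by (simp add: pos_divide_le_eq)
  then have "1 / (t * (s - a)) \<le> D / (h s - h a)"
    using assms(1-3) \<open>0 < D\<close> by (simp add: divide_simps mult.commute mult.left_commute)
  moreover have "((\<lambda>z. ln (h z - h a)) has_real_derivative D / (h s - h a)) (at s)"
    using D assms(3) by (auto intro!: derivative_eq_intros)
  moreover have "((\<lambda>z. ln (z - a) / t) has_real_derivative 1 / (t * (s - a))) (at s)"
    using assms(1,2) by (auto intro!: derivative_eq_intros)
  ultimately show ?thesis
    by (intro exI[of _ "D / (h s - h a) - 1 / (t * (s - a))"]) (auto intro: DERIV_diff)
qed


lemma ln_growth_mono:
  fixes h :: "real \<Rightarrow> real"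
  assumes "mono_on {a..<b} h" and "0 < t" and "a < y" "y \<le> x" "x < b" and "h a < h y"
    and "negligible N"
    and good: "\<And>s. s \<in> {y..<x} \<Longrightarrow> s \<notin> N \<Longrightarrow>
                 (\<exists>D. (h has_real_derivative D) (at s)) \<and> growth_quot h a s \<le> ereal t"
  shows "ln (h y - h a) - ln (y - a) / t \<le> ln (h x - h a) - ln (x - a) / t"
proof (rule le_if_deriv_nonneg_ae[OF \<open>y \<le> x\<close> _ _ \<open>negligible N\<close>])
  have h_le: "h u \<le> h v" if "y \<le> u" "u \<le> v" "v \<le> x" for u v
    using that assms(3,5) by (intro mono_onD[OF assms(1)]) auto
  show "0 \<le> 1 / (t * (y - a))"
    using assms(2,3) by simp
  fix s s'
  assume s: "y \<le> s" "s < s'" "s' \<le> x"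
  have "ln (s' - a) - ln (s - a) = ln ((s' - a) / (s - a))"
    using s assms(3) by (simp add: ln_div)
  also have "\<dots> \<le> (s' - a) / (s - a) - 1"
    using s assms(3) by (intro ln_le_minus_one) simp
  also have "\<dots> = (s' - s) / (s - a)"
    using s assms(3) by (simp add: field_simps)
  also have "\<dots> \<le> (s' - s) / (y - a)"
    using s assms(3) by (intro divide_left_mono) auto
  finally have "(ln (s' - a) - ln (s - a)) / t \<le> (s' - s) / (y - a) / t"
    by (rule divide_right_mono) (use assms(2) in simp)
  then have "ln (s' - a) / t - ln (s - a) / t \<le> 1 / (t * (y - a)) * (s' - s)"
    by (simp add: diff_divide_distrib mult.commute)
  moreover have "ln (h s - h a) \<le> ln (h s' - h a)"
    using h_le[of y s] h_le[of s s'] s assms(6) by simp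
  ultimately show "- (1 / (t * (y - a))) * (s' - s) \<le>
      (ln (h s' - h a) - ln (s' - a) / t) - (ln (h s - h a) - ln (s - a) / t)"
    by linarith
next
  fix s
  assume s: "s \<in> {y..<x}" "s \<notin> N"
  then obtain D where D: "(h has_real_derivative D) (at s)" and "growth_quot h a s \<le> ereal t"
    using good by blast
  moreover have "0 \<le> D"
    using mono_on_deriv_nonneg[OF assms(1) _ _ D] s assms(3,5) by auto
  moreover have "h a < h s"
    using assms(6) mono_onD[OF assms(1), of y s] s assms(3,5) by auto
  ultimately show "\<exists>D\<ge>0. ((\<lambda>z. ln (h z - h a) - ln (z - a) / t) has_real_derivative D) (at s)"
    using s assms(2,3) by (intro ln_growth_has_nonneg_derivative) auto
qed

lemma growth_ratio_Limsup_le: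
  fixes h :: "real \<Rightarrow> real"
  assumes "mono_on {a..<b} h" and "0 < t" and "0 < q" "q < 1"
    and "a < \<delta>" "\<delta> < b" and AE: "AE x in lborel. x \<in> {a..\<delta>} \<longrightarrow> growth_quot h a x \<le> ereal t"
  shows "Limsup (at_right a) (\<lambda>x. ereal ((h (a + q * (x - a)) - h a) / (h x - h a)))
           \<le> ereal (q powr (1 / t))"
proof (rule Limsup_bounded, rule eventually_at_rightI[OF _ \<open>a < \<delta>\<close>])
  have "AE x in lebesgue. x \<in> {a..\<delta>} \<longrightarrow> growth_quot h a x \<le> ereal t"
    using AE by (rule AE_completion)
  then obtain N0 where "negligible N0"
    and N0: "{x. \<not> (x \<in> {a..\<delta>} \<longrightarrow> growth_quot h a x \<le> ereal t)} \<subseteq> N0"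
    unfolding eventually_ae_filter_negligible by blast
  define N where "N = N0 \<union> {x\<in>{a<..<b}. \<not> (\<exists>D. (h has_real_derivative D) (at x))}"
  have "negligible N"
    unfolding N_def using \<open>negligible N0\<close> mono_on_differentiable_ae[OF assms(1)] by (rule negligible_Un)
  fix x
  assume x: "x \<in> {a<..<\<delta>}"
  define y where "y = a + q * (x - a)"
  have "q * (x - a) < x - a"
    using x \<open>q < 1\<close> by simp
  moreover have "0 < q * (x - a)"
    using x \<open>0 < q\<close> by simp
  ultimately have y: "a < y" "y < x"
    unfolding y_def by linarith+
  have h_le: "h u \<le> h v" if "a \<le> u" "u \<le> v" "v \<le> x" for u v
    using that x assms(6) by (intro mono_onD[OF assms(1)]) auto
  have "(h y - h a) / (h x - h a) \<le> q powr (1 / t)"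
  proof (cases "h y = h a")
    case False
    then have "h a < h y" "h a < h x"
      using h_le[of a y] h_le[of y x] y by auto
    have "ln (h y - h a) - ln (y - a) / t \<le> ln (h x - h a) - ln (x - a) / t"
    proof (rule ln_growth_mono[OF assms(1,2) y(1) less_imp_le[OF y(2)] _ \<open>h a < h y\<close> \<open>negligible N\<close>])
      show "x < b"
        using x assms(6) by simp
      fix s
      assume "s \<in> {y..<x}" "s \<notin> N"
      moreover have "s \<in> {a..\<delta>}" "s \<in> {a<..<b}"
        using \<open>s \<in> {y..<x}\<close> y x assms(6) by auto
      ultimately show "(\<exists>D. (h has_real_derivative D) (at s)) \<and> growth_quot h a s \<le> ereal t"
        using N0 unfolding N_def by blast
    qed
    moreover have "ln (y - a) = ln q + ln (x - a)"
      using x \<open>0 < q\<close> by (simp add: y_def ln_mult)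
    ultimately have "ln (h y - h a) \<le> ln (h x - h a) + ln q / t"
      by (simp add: add_divide_distrib)
    then have "h y - h a \<le> exp (ln (h x - h a) + ln q / t)"
      using \<open>h a < h y\<close> by (metis exp_le_cancel_iff exp_ln diff_gt_0_iff_gt)
    also have "\<dots> = (h x - h a) * q powr (1 / t)"
      using \<open>h a < h x\<close> \<open>0 < q\<close> by (simp add: exp_add powr_def)
    finally show ?thesis
      using \<open>h a < h x\<close> by (simp add: pos_divide_le_eq mult.commute)
  qed simp
  then show "ereal ((h (a + q * (x - a)) - h a) / (h x - h a)) \<le> ereal (q powr (1 / t))"
    by (simp add: y_def)
qed

lemma ess_limsup_at_right_less_imp_AE:
  assumes "ess_limsup_at_right a b f < ereal t"
  obtains \<delta> where "a < \<delta>" "\<delta> < b" "AE x in lborel. x \<in> {a..\<delta>} \<longrightarrow> f x \<le> ereal t"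
proof -
  obtain t0 \<delta> where "t0 < t" "a < \<delta>" "\<delta> < b" and AE: "AE x in lborel. x \<in> {a..\<delta>} \<longrightarrow> f x \<le> ereal t0"
    using assms unfolding ess_limsup_at_right_def Inf_less_iff by auto
  from AE have "AE x in lborel. x \<in> {a..\<delta>} \<longrightarrow> f x \<le> ereal t"
    by eventually_elim (use \<open>t0 < t\<close> in \<open>auto intro: order_trans\<close>)
  with \<open>a < \<delta>\<close> \<open>\<delta> < b\<close> show ?thesis
    by (rule that)
qed

lemma le_0_if_le_powr_inverse:
  fixes L :: ereal
  assumes "0 < q" "q < 1" and bound: "\<And>t. 0 < t \<Longrightarrow> L \<le> ereal (q powr (1 / t))"
  shows "L \<le> 0"
proof (rule ereal_le_epsilon2)
  fix e :: real
  assume "0 < e"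
  show "L \<le> 0 + ereal e"
  proof (cases "e < 1")
    case True
    define t where "t = ln q / ln e"
    have "ln q < 0" "ln e < 0"
      using \<open>0 < q\<close> \<open>q < 1\<close> \<open>0 < e\<close> True by simp_all
    then have "0 < t"
      by (simp add: t_def divide_neg_neg)
    have "q powr (1 / t) = exp (ln e)"
      using \<open>0 < q\<close> \<open>ln q < 0\<close> by (simp add: powr_def t_def)
    then show ?thesis
      using bound[OF \<open>0 < t\<close>] \<open>0 < e\<close> by simp
  next
    case False
    have "q powr (1 / 1) \<le> 1"
      using assms(1,2) by simp
    then show ?thesis
      using bound[of 1] False by (simp add: order_trans)
  qed
qed

lemma le_pow_inv_if_le_powr_above:
  fixes C L :: ereal
  assumes "0 < q" "q < 1" and "C < \<infinity>"
    and bound: "\<And>t. 0 < t \<Longrightarrow> C < ereal t \<Longrightarrow> L \<le> ereal (q powr (1 / t))"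
  shows "L \<le> pow_inv q C"
proof (cases "C \<le> 0")
  case True
  have "L \<le> 0"
  proof (rule le_0_if_le_powr_inverse[OF assms(1,2)])
    fix t :: real
    assume "0 < t"
    with True have "C < ereal t"
      by (cases C) auto
    with \<open>0 < t\<close> show "L \<le> ereal (q powr (1 / t))"
      by (rule bound)
  qed
  moreover have "0 \<le> pow_inv q C"
    unfolding pow_inv_def by simp
  ultimately show ?thesis
    by (rule order_trans)
next
  case False
  then obtain c where C: "C = ereal c" and "0 < c"
    using \<open>C < \<infinity>\<close> by (cases C) auto
  have "((\<lambda>t. ereal (q powr (1 / t))) \<longlongrightarrow> ereal (q powr (1 / c))) (at_right c)"
    using \<open>0 < c\<close> \<open>0 < q\<close> by (intro tendsto_intros) auto
  moreover have "\<forall>\<^sub>F t in at_right c. L \<le> ereal (q powr (1 / t))"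
    using \<open>0 < c\<close> by (intro eventually_at_rightI[of c "c + 1"] bound) (auto simp: C)
  ultimately have "L \<le> ereal (q powr (1 / c))"
    by (intro tendsto_le[OF _ _ tendsto_const]) simp_all
  then show ?thesis
    using \<open>0 < c\<close> by (simp add: pow_inv_def C)
qed

theorem lemma1:
  fixes a b :: real and h :: "real \<Rightarrow> real"
  assumes "a < b"
    and "mono_on {a..<b} h"
    and "ess_limsup_at_right a b (growth_quot h a) < \<infinity>"
  shows "\<forall>q \<in> {0<..<1}.
           Limsup (at_right a) (\<lambda>x. ereal ((h (a + q * (x - a)) - h a) / (h x - h a)))
             \<le> pow_inv q (ess_limsup_at_right a b (growth_quot h a))"
proof
  fix q :: real
  assume "q \<in> {0<..<1}"
  then have "0 < q" "q < 1"
    by auto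
  then show "Limsup (at_right a) (\<lambda>x. ereal ((h (a + q * (x - a)) - h a) / (h x - h a)))
               \<le> pow_inv q (ess_limsup_at_right a b (growth_quot h a))"
  proof (rule le_pow_inv_if_le_powr_above[OF _ _ assms(3)])
    fix t :: real
    assume "0 < t" "ess_limsup_at_right a b (growth_quot h a) < ereal t"
    then obtain \<delta> where "a < \<delta>" "\<delta> < b" "AE x in lborel. x \<in> {a..\<delta>} \<longrightarrow> growth_quot h a x \<le> ereal t"
      by (auto elim: ess_limsup_at_right_less_imp_AE)
    then show "Limsup (at_right a) (\<lambda>x. ereal ((h (a + q * (x - a)) - h a) / (h x - h a)))
                 \<le> ereal (q powr (1 / t))"
      by (rule growth_ratio_Limsup_le[OF assms(2) \<open>0 < t\<close> \<open>0 < q\<close> \<open>q < 1\<close>])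
  qed
qed

end
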